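(* Let $\varphi=\sum_{n=-\infty}^{\infty}\varphi_nz^n\in L^\infty(\mathbb{T})$, and let $C$ be a conjugation on $H^2(\mathbb{D})$ and $\{f_n\}_{n\in\mathbb{Z}_+}$ an orthonormal basis of $H^2(\mathbb{D})$ with $Cf_n=f_n$ for all $n$. Set \[ c_{n,m}:=\sum_{k=0}^\infty\langle f_k,z^n\rangle\langle f_k,z^m\rangle\qquad(m,n\in\mathbb{Z}_+). \] Then $T_\varphi$ is $C$-symmetric if and only if \[ \sum_{n=0}^{\infty}\overline{\varphi_{n-k}}\,c_{n,j}=\sum_{n=1}^{\infty}\overline{\varphi_n}\,c_{k,n+j}+\sum_{l=0}^{j}\overline{\varphi_{-l}}\,c_{k,j-l} \] for all $j,k\in\mathbb{Z}_+$.
   Context: A conjugation on a Hilbert space is an anti-linear, involutive ($C^2=I$), isometric map; a bounded operator $T$ is $C$-symmetric if $CT^*C=T$. $H^2(\mathbb{D})$ is the Hardy space of the unit disc, viewed as the closed subspace of $L^2(\mathbb{T})$ of functions with vanishing negative Fourier coefficients, with orthonormal basis $\{z^n\}_{n\in\mathbb{Z}_+}$; inner products are linear in the first entry. For $\varphi\in L^\infty(\mathbb{T})$, $T_\varphi f=P_{H^2(\mathbb{D})}(\varphi f)$. *)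

theory Defs
  imports "HOL-Analysis.Analysis"
begin

text \<open>Model of the Hardy space: H^2(D) is identified (unitarily, via Fourier coefficients)
  with square-summable sequences indexed by Z_+; the basis vector z^n is the n-th unit
  sequence. Inner product is linear in the first entry.\<close>

definition H2 :: "(nat \<Rightarrow> complex) set" where
  "H2 = {a. summable (\<lambda>n. (cmod (a n))\<^sup>2)}"

definition hinner :: "(nat \<Rightarrow> complex) \<Rightarrow> (nat \<Rightarrow> complex) \<Rightarrow> complex" where
  "hinner a b = (\<Sum>n. a n * cnj (b n))"

definition hnorm :: "(nat \<Rightarrow> complex) \<Rightarrow> real" where
  "hnorm a = sqrt (\<Sum>n. (cmod (a n))\<^sup>2)"

definition zpow :: "nat \<Rightarrow> (nat \<Rightarrow> complex)" where
  "zpow n = (\<lambda>k. if k = n then 1 else 0)"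

text \<open>Functions on the unit circle are parametrised by t in [0, 2 pi].\<close>

definition Linf_circle :: "(real \<Rightarrow> complex) \<Rightarrow> bool" where
  "Linf_circle \<phi> \<longleftrightarrow> set_borel_measurable lborel {0..2*pi} \<phi> \<and>
     (\<exists>B. AE t in lborel. t \<in> {0..2*pi} \<longrightarrow> cmod (\<phi> t) \<le> B)"

definition fourier_coeff :: "(real \<Rightarrow> complex) \<Rightarrow> int \<Rightarrow> complex" where
  "fourier_coeff \<phi> n =
     (LINT t:{0..2*pi}|lborel. \<phi> t * cis (- (real_of_int n * t))) / complex_of_real (2*pi)"

text \<open>Toeplitz operator T_phi f = P(phi f), written in the basis z^n:
  the n-th Fourier coefficient of phi f is sum_m phi_(n-m) f_m.\<close>

definition toeplitz :: "(real \<Rightarrow> complex) \<Rightarrow> (nat \<Rightarrow> complex) \<Rightarrow> (nat \<Rightarrow> complex)" where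
  "toeplitz \<phi> a = (\<lambda>n. \<Sum>m. fourier_coeff \<phi> (int n - int m) * a m)"

definition conjugation :: "((nat \<Rightarrow> complex) \<Rightarrow> (nat \<Rightarrow> complex)) \<Rightarrow> bool" where
  "conjugation C \<longleftrightarrow> (\<forall>a\<in>H2. C a \<in> H2) \<and>
     (\<forall>a\<in>H2. \<forall>b\<in>H2. C (\<lambda>n. a n + b n) = (\<lambda>n. C a n + C b n)) \<and>
     (\<forall>a\<in>H2. \<forall>c. C (\<lambda>n. c * a n) = (\<lambda>n. cnj c * C a n)) \<and>
     (\<forall>a\<in>H2. C (C a) = a) \<and>
     (\<forall>a\<in>H2. hnorm (C a) = hnorm a)"

definition orthonormal_basis :: "(nat \<Rightarrow> (nat \<Rightarrow> complex)) \<Rightarrow> bool" where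
  "orthonormal_basis f \<longleftrightarrow> (\<forall>k. f k \<in> H2) \<and>
     (\<forall>i j. hinner (f i) (f j) = (if i = j then 1 else 0)) \<and>
     (\<forall>a\<in>H2. (\<forall>k. hinner a (f k) = 0) \<longrightarrow> a = (\<lambda>_. 0))"

definition hadjoint :: "((nat \<Rightarrow> complex) \<Rightarrow> (nat \<Rightarrow> complex)) \<Rightarrow> (nat \<Rightarrow> complex) \<Rightarrow> (nat \<Rightarrow> complex)" where
  "hadjoint T b = (if b \<in> H2 then (THE c. c \<in> H2 \<and> (\<forall>a\<in>H2. hinner (T a) b = hinner a c))
                   else (\<lambda>_. 0))"

definition C_symmetric ::
  "((nat \<Rightarrow> complex) \<Rightarrow> (nat \<Rightarrow> complex)) \<Rightarrow> ((nat \<Rightarrow> complex) \<Rightarrow> (nat \<Rightarrow> complex)) \<Rightarrow> bool" where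
  "C_symmetric C T \<longleftrightarrow> (\<forall>a\<in>H2. C (hadjoint T (C a)) = T a)"

definition cnm :: "(nat \<Rightarrow> (nat \<Rightarrow> complex)) \<Rightarrow> nat \<Rightarrow> nat \<Rightarrow> complex" where
  "cnm f n m = (\<Sum>k. hinner (f k) (zpow n) * hinner (f k) (zpow m))"

end

theory Submission
  imports Defs
begin

text \<open>The Toeplitz operator is the matrix operator with entries \<open>\<phi>\<^sub>n\<^sub>-\<^sub>m\<close>. This matrix is
  bounded on square-summable sequences: each finite section of its sesquilinear form is the
  integral of \<open>\<phi>\<close> against a product of two trigonometric polynomials, so Cauchy--Schwarz and
  Parseval bound it by the essential supremum of \<open>\<phi>\<close>. Hence its adjoint is the
  conjugate-transposed matrix. For any adjoint pair \<open>T, T'\<close> and conjugation \<open>C\<close>, the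
  coordinates of \<open>T' (C a)\<close> and \<open>C (T a)\<close> are \<open>\<langle>C (T z\<^sup>k), a\<rangle>\<close> and \<open>\<langle>T' (C z\<^sup>k), a\<rangle>\<close>,
  so \<open>C T\<^sup>* C = T\<close> holds iff \<open>(T' (C z\<^sup>j))\<^sub>k\<close> is symmetric in \<open>j, k\<close>. Expanding \<open>C z\<^sup>m\<close> in the
  \<open>C\<close>-real basis \<open>f\<close> shows that its coordinates are the \<open>c\<^sub>n\<^sub>,\<^sub>m\<close>, and splitting the series for
  \<open>(T' (C z\<^sup>k))\<^sub>j\<close> at \<open>n = j\<close> yields the right-hand side of the criterion.\<close>

section \<open>Square-summable sequences\<close>

definition hsqnorm :: "(nat \<Rightarrow> complex) \<Rightarrow> real" where
  "hsqnorm a = (\<Sum>n. (cmod (a n))\<^sup>2)"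

lemma mem_H2_iff: "a \<in> H2 \<longleftrightarrow> summable (\<lambda>n. (cmod (a n))\<^sup>2)"
  unfolding H2_def by simp

lemma hnorm_eq_sqrt_hsqnorm: "hnorm a = sqrt (hsqnorm a)"
  unfolding hnorm_def hsqnorm_def by simp

lemma hsqnorm_nonneg: "a \<in> H2 \<Longrightarrow> 0 \<le> hsqnorm a"
  unfolding hsqnorm_def mem_H2_iff by (rule suminf_nonneg) simp_all

lemma partial_sum_le_hsqnorm: "a \<in> H2 \<Longrightarrow> (\<Sum>n<N. (cmod (a n))\<^sup>2) \<le> hsqnorm a"
  unfolding hsqnorm_def mem_H2_iff by (rule sum_le_suminf) auto

lemma H2_if_partial_sums_bounded:
  assumes "\<And>N. (\<Sum>n<N. (cmod (a n))\<^sup>2) \<le> B"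
  shows "a \<in> H2" and "hsqnorm a \<le> B"
proof -
  show H2: "a \<in> H2"
    unfolding mem_H2_iff by (rule summableI_nonneg_bounded) (use assms in auto)
  show "hsqnorm a \<le> B"
    using H2 unfolding hsqnorm_def mem_H2_iff by (rule suminf_le_const) (rule assms)
qed

lemma summable_norm_mult_if_square_summable:
  fixes x y :: "nat \<Rightarrow> 'a::real_normed_div_algebra"
  assumes "summable (\<lambda>n. (norm (x n))\<^sup>2)" "summable (\<lambda>n. (norm (y n))\<^sup>2)"
  shows "summable (\<lambda>n. norm (x n * y n))"
proof (rule summable_comparison_test[OF _ summable_mult[OF summable_add[OF assms]]])
  show "\<exists>N. \<forall>n\<ge>N. norm (norm (x n * y n)) \<le> 1/2 * ((norm (x n))\<^sup>2 + (norm (y n))\<^sup>2)"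
    using sum_squares_bound[of "norm (x _)" "norm (y _)"] by (auto simp: norm_mult field_simps)
qed

lemma summable_mult_if_square_summable:
  fixes x y :: "nat \<Rightarrow> 'a::{real_normed_div_algebra, banach}"
  assumes "summable (\<lambda>n. (norm (x n))\<^sup>2)" "summable (\<lambda>n. (norm (y n))\<^sup>2)"
  shows "summable (\<lambda>n. x n * y n)"
  using summable_norm_cancel[OF summable_norm_mult_if_square_summable[OF assms]] .

lemma summable_hinner: "a \<in> H2 \<Longrightarrow> b \<in> H2 \<Longrightarrow> summable (\<lambda>n. a n * cnj (b n))"
  by (intro summable_mult_if_square_summable) (auto simp: mem_H2_iff)

lemma H2_add: "a \<in> H2 \<Longrightarrow> b \<in> H2 \<Longrightarrow> (\<lambda>n. a n + b n) \<in> H2"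
proof -
  assume "a \<in> H2" "b \<in> H2"
  then have "summable (\<lambda>n. 2 * ((cmod (a n))\<^sup>2 + (cmod (b n))\<^sup>2))"
    unfolding mem_H2_iff by (intro summable_mult summable_add)
  then show ?thesis unfolding mem_H2_iff
  proof (rule summable_comparison_test[rotated], intro exI allI impI)
    fix n
    have "(cmod (a n + b n))\<^sup>2 \<le> (cmod (a n) + cmod (b n))\<^sup>2"
      by (simp add: power_mono norm_triangle_ineq)
    also have "\<dots> \<le> 2 * ((cmod (a n))\<^sup>2 + (cmod (b n))\<^sup>2)"
      using sum_squares_bound[of "cmod (a n)" "cmod (b n)"] by (simp add: power2_sum)
    finally show "norm ((cmod (a n + b n))\<^sup>2) \<le> 2 * ((cmod (a n))\<^sup>2 + (cmod (b n))\<^sup>2)" by simp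
  qed
qed

lemma H2_scale: "a \<in> H2 \<Longrightarrow> (\<lambda>n. c * a n) \<in> H2"
  unfolding mem_H2_iff by (simp add: norm_mult power_mult_distrib summable_mult)

lemma H2_diff: "a \<in> H2 \<Longrightarrow> b \<in> H2 \<Longrightarrow> (\<lambda>n. a n - b n) \<in> H2"
  using H2_add[of a "\<lambda>n. - b n"] by (simp add: mem_H2_iff)

lemma H2_finite_support: "finite F \<Longrightarrow> (\<And>n. n \<notin> F \<Longrightarrow> a n = 0) \<Longrightarrow> a \<in> H2"
  unfolding mem_H2_iff by (rule summable_finite[where N=F]) auto

lemma zpow_H2: "zpow k \<in> H2"
  by (rule H2_finite_support[of "{k}"]) (auto simp: zpow_def)

lemma hinner_zpow_right: "hinner a (zpow k) = a k"
  unfolding hinner_def by (subst suminf_finite[of "{k}"]) (auto simp: zpow_def)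

lemma hinner_zpow_left: "hinner (zpow k) a = cnj (a k)"
  unfolding hinner_def by (subst suminf_finite[of "{k}"]) (auto simp: zpow_def)

lemma suminf_cnj: "summable f \<Longrightarrow> (\<Sum>n. cnj (f n)) = cnj (suminf f)"
  using sums_cnj[of f "suminf f"] by (simp add: sums_unique[symmetric] summable_sums)

lemma hinner_commute:
  assumes "a \<in> H2" "b \<in> H2"
  shows "hinner b a = cnj (hinner a b)"
  using suminf_cnj[OF summable_hinner[OF assms]] unfolding hinner_def by (simp add: mult.commute)

lemma hinner_add_left:
  "a \<in> H2 \<Longrightarrow> b \<in> H2 \<Longrightarrow> c \<in> H2 \<Longrightarrow> hinner (\<lambda>n. a n + b n) c = hinner a c + hinner b c"
  unfolding hinner_def by (simp add: distrib_right suminf_add[OF summable_hinner summable_hinner])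

lemma hinner_diff_left:
  "a \<in> H2 \<Longrightarrow> b \<in> H2 \<Longrightarrow> c \<in> H2 \<Longrightarrow> hinner (\<lambda>n. a n - b n) c = hinner a c - hinner b c"
  unfolding hinner_def by (simp add: left_diff_distrib suminf_diff[OF summable_hinner summable_hinner])

lemma hinner_scale_left: "a \<in> H2 \<Longrightarrow> c \<in> H2 \<Longrightarrow> hinner (\<lambda>n. x * a n) c = x * hinner a c"
  unfolding hinner_def by (simp add: mult.assoc suminf_mult[OF summable_hinner])

lemma hinner_add_right:
  "a \<in> H2 \<Longrightarrow> b \<in> H2 \<Longrightarrow> c \<in> H2 \<Longrightarrow> hinner c (\<lambda>n. a n + b n) = hinner c a + hinner c b"
  unfolding hinner_def by (simp add: distrib_left suminf_add[OF summable_hinner summable_hinner])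

lemma hinner_scale_right: "a \<in> H2 \<Longrightarrow> c \<in> H2 \<Longrightarrow> hinner c (\<lambda>n. x * a n) = cnj x * hinner c a"
  unfolding hinner_def by (simp add: mult.left_commute suminf_mult[OF summable_hinner])

lemma hinner_self: "a \<in> H2 \<Longrightarrow> hinner a a = complex_of_real (hsqnorm a)"
  unfolding hinner_def hsqnorm_def mem_H2_iff
  by (simp add: suminf_of_real flip: complex_norm_square)

lemma hinner_Cauchy_Schwarz:
  assumes a: "a \<in> H2" and b: "b \<in> H2"
  shows "cmod (hinner a b) \<le> hnorm a * hnorm b"
proof -
  have sn: "summable (\<lambda>n. norm (a n * cnj (b n)))"
    using a b by (intro summable_norm_mult_if_square_summable) (auto simp: mem_H2_iff)
  have "cmod (hinner a b) \<le> (\<Sum>n. norm (a n * cnj (b n)))"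
    unfolding hinner_def by (rule summable_norm[OF sn])
  also have "\<dots> \<le> hnorm a * hnorm b"
  proof (rule suminf_le_const[OF sn])
    fix N
    have "(\<Sum>n<N. norm (a n * cnj (b n))) = (\<Sum>n<N. \<bar>cmod (a n)\<bar> * \<bar>cmod (b n)\<bar>)"
      by (simp add: norm_mult)
    also have "\<dots> \<le> L2_set (\<lambda>n. cmod (a n)) {..<N} * L2_set (\<lambda>n. cmod (b n)) {..<N}"
      by (rule L2_set_mult_ineq)
    also have "\<dots> \<le> hnorm a * hnorm b"
      unfolding L2_set_def hnorm_eq_sqrt_hsqnorm
      using a b hsqnorm_nonneg[OF a]
      by (intro mult_mono real_sqrt_le_mono partial_sum_le_hsqnorm) (auto simp: sum_nonneg)
    finally show "(\<Sum>n<N. norm (a n * cnj (b n))) \<le> hnorm a * hnorm b" .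
  qed
  finally show ?thesis .
qed

section \<open>Conjugations\<close>

lemma
  assumes "conjugation C" and "a \<in> H2"
  shows conjugation_H2: "C a \<in> H2"
    and conjugation_involutive: "C (C a) = a"
    and conjugation_hnorm: "hnorm (C a) = hnorm a"
    and conjugation_scale: "C (\<lambda>n. c * a n) = (\<lambda>n. cnj c * C a n)"
  using assms unfolding conjugation_def by blast+

lemma conjugation_add:
  "conjugation C \<Longrightarrow> a \<in> H2 \<Longrightarrow> b \<in> H2 \<Longrightarrow> C (\<lambda>n. a n + b n) = (\<lambda>n. C a n + C b n)"
  unfolding conjugation_def by blast

lemma conjugation_hinner_self:
  assumes C: "conjugation C" and a: "a \<in> H2"
  shows "hinner (C a) (C a) = hinner a a"
proof -
  have "hsqnorm (C a) = hsqnorm a"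
    using conjugation_hnorm[OF C a] by (simp add: hnorm_eq_sqrt_hsqnorm)
  then show ?thesis by (simp add: hinner_self a conjugation_H2[OF C a])
qed

lemma Re_conjugation_hinner:
  assumes C: "conjugation C" and x: "x \<in> H2" and y: "y \<in> H2"
  shows "Re (hinner (C x) (C y)) = Re (hinner y x)"
proof -
  have Cx: "C x \<in> H2" and Cy: "C y \<in> H2" using conjugation_H2[OF C] x y by auto
  have "hinner (C x) (C x) + hinner (C x) (C y) + hinner (C y) (C x) + hinner (C y) (C y)
      = hinner (C (\<lambda>n. x n + y n)) (C (\<lambda>n. x n + y n))"
    unfolding conjugation_add[OF C x y] using Cx Cy H2_add[OF Cx Cy]
    by (simp add: hinner_add_left hinner_add_right)
  also have "\<dots> = hinner (\<lambda>n. x n + y n) (\<lambda>n. x n + y n)"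
    by (rule conjugation_hinner_self[OF C H2_add[OF x y]])
  also have "\<dots> = hinner x x + hinner x y + hinner y x + hinner y y"
    using x y H2_add[OF x y] by (simp add: hinner_add_left hinner_add_right)
  finally have "hinner (C x) (C y) + hinner (C y) (C x) = hinner x y + hinner y x"
    using conjugation_hinner_self[OF C x] conjugation_hinner_self[OF C y] by simp
  then have "hinner (C x) (C y) + cnj (hinner (C x) (C y)) = cnj (hinner y x) + hinner y x"
    using hinner_commute[OF Cx Cy] hinner_commute[OF y x] by simp
  then have "Re (hinner (C x) (C y) + cnj (hinner (C x) (C y))) = Re (cnj (hinner y x) + hinner y x)"
    by (rule arg_cong)
  then show ?thesis by simp
qed

lemma conjugation_hinner:
  assumes C: "conjugation C" and x: "x \<in> H2" and y: "y \<in> H2"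
  shows "hinner (C x) (C y) = hinner y x"
proof (rule complex_eqI)
  show "Re (hinner (C x) (C y)) = Re (hinner y x)" by (rule Re_conjugation_hinner[OF C x y])
  have Cx: "C x \<in> H2" and Cy: "C y \<in> H2" using conjugation_H2[OF C] x y by auto
  have ix: "(\<lambda>n. \<i> * x n) \<in> H2" by (rule H2_scale[OF x])
  have "Re (hinner (C (\<lambda>n. \<i> * x n)) (C y)) = Re (hinner y (\<lambda>n. \<i> * x n))"
    by (rule Re_conjugation_hinner[OF C ix y])
  moreover have "hinner (C (\<lambda>n. \<i> * x n)) (C y) = - \<i> * hinner (C x) (C y)"
    unfolding conjugation_scale[OF C x] using hinner_scale_left[OF Cx Cy, of "cnj \<i>"] by simp
  moreover have "hinner y (\<lambda>n. \<i> * x n) = - \<i> * hinner y x"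
    using hinner_scale_right[OF x y, of \<i>] by simp
  ultimately show "Im (hinner (C x) (C y)) = Im (hinner y x)" by simp
qed

section \<open>Orthonormal bases\<close>

lemma
  assumes "orthonormal_basis f"
  shows orthonormal_basis_H2: "f k \<in> H2"
    and orthonormal_basis_hinner: "hinner (f i) (f j) = (if i = j then 1 else 0)"
  using assms unfolding orthonormal_basis_def by blast+

lemma orthonormal_basis_complete:
  "orthonormal_basis f \<Longrightarrow> a \<in> H2 \<Longrightarrow> (\<And>k. hinner a (f k) = 0) \<Longrightarrow> a = (\<lambda>_. 0)"
  unfolding orthonormal_basis_def by blast

lemma H2_lincomb:
  assumes "\<And>k. f k \<in> H2" "finite F"
  shows "(\<lambda>n. \<Sum>k\<in>F. d k * f k n) \<in> H2"
  using assms(2)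
proof (induction F rule: finite_induct)
  case empty
  then show ?case by (simp add: H2_finite_support[of "{}"])
next
  case (insert k F)
  have "(\<lambda>n. d k * f k n + (\<Sum>k\<in>F. d k * f k n)) \<in> H2"
    by (rule H2_add[OF H2_scale[OF assms(1)] insert.IH])
  then show ?case using insert.hyps by simp
qed

lemma hinner_lincomb_left:
  assumes "\<And>k. f k \<in> H2" "finite F" "z \<in> H2"
  shows "hinner (\<lambda>n. \<Sum>k\<in>F. d k * f k n) z = (\<Sum>k\<in>F. d k * hinner (f k) z)"
proof -
  have "hinner (\<lambda>n. \<Sum>k\<in>F. d k * f k n) z = (\<Sum>n. \<Sum>k\<in>F. d k * (f k n * cnj (z n)))"
    unfolding hinner_def by (simp add: sum_distrib_right mult.assoc)
  also have "\<dots> = (\<Sum>k\<in>F. \<Sum>n. d k * (f k n * cnj (z n)))"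
    by (rule suminf_sum) (intro summable_mult summable_hinner assms)
  also have "\<dots> = (\<Sum>k\<in>F. d k * hinner (f k) z)"
    unfolding hinner_def by (intro sum.cong refl suminf_mult summable_hinner assms)
  finally show ?thesis .
qed

lemma orthonormal_lincomb_hinner_basis:
  assumes "orthonormal_basis f" "finite F"
  shows "hinner (\<lambda>n. \<Sum>k\<in>F. d k * f k n) (f j) = (if j \<in> F then d j else 0)"
  using assms(2)
  by (simp add: hinner_lincomb_left orthonormal_basis_H2[OF assms(1)] orthonormal_basis_hinner[OF assms(1)]
      if_distrib[of "\<lambda>x. _ * x"] sum.delta' cong: if_cong)

lemma orthonormal_lincomb_hsqnorm:
  assumes "orthonormal_basis f" "finite F"
  shows "hsqnorm (\<lambda>n. \<Sum>k\<in>F. d k * f k n) = (\<Sum>k\<in>F. (cmod (d k))\<^sup>2)"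
proof -
  note fH = orthonormal_basis_H2[OF assms(1)]
  define g where "g = (\<lambda>n. \<Sum>k\<in>F. d k * f k n)"
  have g: "g \<in> H2" unfolding g_def by (rule H2_lincomb[OF fH assms(2)])
  have "complex_of_real (hsqnorm g) = hinner g g"
    by (rule hinner_self[OF g, symmetric])
  also have "\<dots> = (\<Sum>k\<in>F. d k * hinner (f k) g)"
    by (subst (1) g_def) (rule hinner_lincomb_left[OF fH assms(2) g])
  also have "\<dots> = (\<Sum>k\<in>F. d k * cnj (d k))"
    using orthonormal_lincomb_hinner_basis[OF assms, of d] hinner_commute[OF g fH]
    by (intro sum.cong) (simp_all add: g_def)
  also have "\<dots> = complex_of_real (\<Sum>k\<in>F. (cmod (d k))\<^sup>2)"
    by (simp only: of_real_sum complex_norm_square)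
  finally show ?thesis unfolding g_def of_real_eq_iff .
qed

lemma Bessel_inequality:
  assumes onb: "orthonormal_basis f" and x: "x \<in> H2"
  shows "(\<Sum>k<K. (cmod (hinner x (f k)))\<^sup>2) \<le> hsqnorm x"
proof -
  note fH = orthonormal_basis_H2[OF onb]
  define c where "c = (\<lambda>k. hinner x (f k))"
  define g where "g = (\<lambda>n. \<Sum>k\<in>{..<K}. c k * f k n)"
  define S where "S = (\<Sum>k<K. (cmod (c k))\<^sup>2)"
  have g: "g \<in> H2" unfolding g_def by (rule H2_lincomb[OF fH]) simp
  have gx: "hinner g x = complex_of_real S"
  proof -
    have "hinner g x = (\<Sum>k<K. c k * hinner (f k) x)"
      unfolding g_def by (rule hinner_lincomb_left[OF fH _ x]) simp
    also have "\<dots> = (\<Sum>k<K. c k * cnj (c k))"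
      unfolding c_def using hinner_commute[OF x fH] by simp
    also have "\<dots> = complex_of_real S" unfolding S_def by (simp only: of_real_sum complex_norm_square)
    finally show ?thesis .
  qed
  have xg: "hinner x g = complex_of_real S" using hinner_commute[OF g x] gx by simp
  have gg: "hinner g g = complex_of_real S"
    using orthonormal_lincomb_hsqnorm[OF onb, of "{..<K}" c] hinner_self[OF g]
    unfolding g_def S_def by simp
  have y: "(\<lambda>n. x n - g n) \<in> H2" by (rule H2_diff[OF x g])
  have "hinner (\<lambda>n. x n - g n) (\<lambda>n. x n - g n) = hinner x x - hinner x g - (hinner g x - hinner g g)"
  proof -
    have "hinner (\<lambda>n. x n - g n) (\<lambda>n. x n - g n) = hinner x (\<lambda>n. x n - g n) - hinner g (\<lambda>n. x n - g n)"
      by (rule hinner_diff_left[OF x g y])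
    also have "hinner x (\<lambda>n. x n - g n) = hinner x x - hinner x g"
      using hinner_commute[OF y x] hinner_diff_left[OF x g x] hinner_commute[OF x x] hinner_commute[OF g x]
      by simp
    also have "hinner g (\<lambda>n. x n - g n) = hinner g x - hinner g g"
      using hinner_commute[OF y g] hinner_diff_left[OF x g g] hinner_commute[OF x g] hinner_commute[OF g g]
      by simp
    finally show ?thesis .
  qed
  then have "complex_of_real (hsqnorm (\<lambda>n. x n - g n)) = complex_of_real (hsqnorm x - S)"
    using hinner_self[OF y] hinner_self[OF x] xg gx gg by simp
  then have "hsqnorm (\<lambda>n. x n - g n) = hsqnorm x - S"
    by (simp only: of_real_eq_iff)
  then show ?thesis using hsqnorm_nonneg[OF y] unfolding S_def c_def by simp
qed

lemma orthonormal_coeffs_H2: "orthonormal_basis f \<Longrightarrow> x \<in> H2 \<Longrightarrow> (\<lambda>k. hinner x (f k)) \<in> H2"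
  by (rule H2_if_partial_sums_bounded(1)) (rule Bessel_inequality)

lemma orthonormal_basis_coord_H2: "orthonormal_basis f \<Longrightarrow> (\<lambda>k. f k n) \<in> H2"
  using orthonormal_coeffs_H2[OF _ zpow_H2, of f n] by (simp add: hinner_zpow_left mem_H2_iff)

lemma sum_le_suminf_shift:
  fixes g :: "nat \<Rightarrow> real"
  assumes "summable g" "\<And>k. 0 \<le> g k" "K \<le> L"
  shows "(\<Sum>k\<in>{K..<L}. g k) \<le> (\<Sum>k. g (k + K))"
proof -
  have "(\<Sum>k\<in>{K..<L}. g k) = (\<Sum>i<L - K. g (i + K))"
    using assms(3) sum.shift_bounds_nat_ivl[of g 0 K "L - K"] by (simp add: atLeast0LessThan)
  also have "\<dots> \<le> (\<Sum>k. g (k + K))"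
    by (rule sum_le_suminf) (use assms in \<open>auto simp: summable_iff_shift\<close>)
  finally show ?thesis .
qed

lemma orthonormal_series_tail:
  assumes onb: "orthonormal_basis f" and c: "c \<in> H2"
  shows "(\<lambda>m. (\<Sum>k. c k * f k m) - (\<Sum>k<K. c k * f k m)) \<in> H2"
    and "hsqnorm (\<lambda>m. (\<Sum>k. c k * f k m) - (\<Sum>k<K. c k * f k m)) \<le> (\<Sum>k. (cmod (c (k + K)))\<^sup>2)"
proof -
  note fH = orthonormal_basis_H2[OF onb]
  define S where "S = (\<lambda>L m. \<Sum>k<L. c k * f k m)"
  have block: "(\<Sum>m<N. (cmod (S L m - S K m))\<^sup>2) \<le> (\<Sum>k. (cmod (c (k + K)))\<^sup>2)"
    if KL: "K \<le> L" for N L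
  proof -
    have block_eq: "S L m - S K m = (\<Sum>k\<in>{K..<L}. c k * f k m)" for m
    proof -
      have "(\<Sum>k\<in>{0..<K}. c k * f k m) + (\<Sum>k\<in>{K..<L}. c k * f k m) = (\<Sum>k\<in>{0..<L}. c k * f k m)"
        by (rule sum.atLeastLessThan_concat) (use KL in auto)
      then show ?thesis
        unfolding S_def by (simp add: atLeast0LessThan algebra_simps)
    qed
    have "(\<Sum>m<N. (cmod (S L m - S K m))\<^sup>2) \<le> hsqnorm (\<lambda>m. S L m - S K m)"
      unfolding block_eq by (intro partial_sum_le_hsqnorm H2_lincomb fH) simp
    also have "\<dots> = (\<Sum>k\<in>{K..<L}. (cmod (c k))\<^sup>2)"
      unfolding block_eq by (rule orthonormal_lincomb_hsqnorm[OF onb]) simp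
    also have "\<dots> \<le> (\<Sum>k. (cmod (c (k + K)))\<^sup>2)"
      using c KL by (intro sum_le_suminf_shift) (auto simp: mem_H2_iff)
    finally show ?thesis .
  qed
  have "(\<Sum>m<N. (cmod ((\<Sum>k. c k * f k m) - S K m))\<^sup>2) \<le> (\<Sum>k. (cmod (c (k + K)))\<^sup>2)" for N
  proof (rule LIMSEQ_le_const2)
    have "(\<lambda>L. S L m) \<longlonglongrightarrow> (\<Sum>k. c k * f k m)" for m
      unfolding S_def using c orthonormal_basis_coord_H2[OF onb]
      by (intro summable_LIMSEQ summable_mult_if_square_summable) (auto simp: mem_H2_iff)
    then show "(\<lambda>L. \<Sum>m<N. (cmod (S L m - S K m))\<^sup>2) \<longlonglongrightarrow> (\<Sum>m<N. (cmod ((\<Sum>k. c k * f k m) - S K m))\<^sup>2)"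
      by (intro tendsto_sum tendsto_power tendsto_norm tendsto_diff tendsto_const)
    show "\<exists>L0. \<forall>L\<ge>L0. (\<Sum>m<N. (cmod (S L m - S K m))\<^sup>2) \<le> (\<Sum>k. (cmod (c (k + K)))\<^sup>2)"
      using block by blast
  qed
  then show "(\<lambda>m. (\<Sum>k. c k * f k m) - (\<Sum>k<K. c k * f k m)) \<in> H2"
    and "hsqnorm (\<lambda>m. (\<Sum>k. c k * f k m) - (\<Sum>k<K. c k * f k m)) \<le> (\<Sum>k. (cmod (c (k + K)))\<^sup>2)"
    unfolding S_def by (fact H2_if_partial_sums_bounded)+
qed

lemma orthonormal_series:
  assumes onb: "orthonormal_basis f" and c: "c \<in> H2"
  shows "(\<lambda>m. \<Sum>k. c k * f k m) \<in> H2" and "hinner (\<lambda>m. \<Sum>k. c k * f k m) (f j) = c j"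
proof -
  note fH = orthonormal_basis_H2[OF onb]
  define y where "y = (\<lambda>m. \<Sum>k. c k * f k m)"
  define S where "S = (\<lambda>K m. \<Sum>k<K. c k * f k m)"
  define t where "t = (\<lambda>K. \<Sum>k. (cmod (c (k + K)))\<^sup>2)"
  have SH: "S K \<in> H2" for K unfolding S_def by (rule H2_lincomb[OF fH]) simp
  have tail: "(\<lambda>m. y m - S K m) \<in> H2" "hsqnorm (\<lambda>m. y m - S K m) \<le> t K" for K
    unfolding y_def S_def t_def by (fact orthonormal_series_tail[OF onb c])+
  show yH: "y \<in> H2" using tail(1)[of 0] by (simp add: S_def)
  have fnorm: "hnorm (f j) = 1"
    using hinner_self[OF fH[of j]] orthonormal_basis_hinner[OF onb, of j j] by (simp add: hnorm_eq_sqrt_hsqnorm)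
  have bound: "cmod (hinner y (f j) - c j) \<le> sqrt (t K)" if "j < K" for K
  proof -
    have "hinner (S K) (f j) = c j"
      unfolding S_def using orthonormal_lincomb_hinner_basis[OF onb, of "{..<K}" c j] that by simp
    then have "cmod (hinner y (f j) - c j) = cmod (hinner (\<lambda>m. y m - S K m) (f j))"
      using hinner_diff_left[OF yH SH fH] by simp
    also have "\<dots> \<le> hnorm (\<lambda>m. y m - S K m)"
      using hinner_Cauchy_Schwarz[OF tail(1)[of K] fH[of j]] by (simp add: fnorm)
    also have "\<dots> \<le> sqrt (t K)"
      unfolding hnorm_eq_sqrt_hsqnorm by (rule real_sqrt_le_mono[OF tail(2)])
    finally show ?thesis .
  qed
  have "t \<longlonglongrightarrow> 0"
    unfolding t_def by (rule suminf_exist_split2) (use c in \<open>simp add: mem_H2_iff\<close>)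
  from tendsto_real_sqrt[OF this] have "(\<lambda>K. sqrt (t K)) \<longlonglongrightarrow> 0"
    by simp
  then have "cmod (hinner y (f j) - c j) \<le> 0"
    by (rule LIMSEQ_le_const) (intro exI[of _ "Suc j"] allI impI bound, simp)
  then show "hinner y (f j) = c j" by simp
qed

lemma orthonormal_basis_expansion:
  assumes onb: "orthonormal_basis f" and x: "x \<in> H2"
  shows "x n = (\<Sum>k. hinner x (f k) * f k n)"
proof -
  define y where "y = (\<lambda>m. \<Sum>k. hinner x (f k) * f k m)"
  note coeffs = orthonormal_coeffs_H2[OF onb x]
  have yH: "y \<in> H2" unfolding y_def by (rule orthonormal_series(1)[OF onb coeffs])
  have "(\<lambda>m. x m - y m) = (\<lambda>_. 0)"
    using orthonormal_series(2)[OF onb coeffs, folded y_def]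
    by (intro orthonormal_basis_complete[OF onb H2_diff[OF x yH]])
      (simp add: hinner_diff_left[OF x yH orthonormal_basis_H2[OF onb]])
  then show ?thesis unfolding y_def by (metis eq_iff_diff_eq_0)
qed

section \<open>Bounded matrices\<close>

definition matrix_op :: "(nat \<Rightarrow> nat \<Rightarrow> complex) \<Rightarrow> (nat \<Rightarrow> complex) \<Rightarrow> (nat \<Rightarrow> complex)" where
  "matrix_op M a = (\<lambda>n. \<Sum>m. M n m * a m)"

definition conj_transpose :: "(nat \<Rightarrow> nat \<Rightarrow> complex) \<Rightarrow> (nat \<Rightarrow> nat \<Rightarrow> complex)" where
  "conj_transpose M = (\<lambda>i j. cnj (M j i))"

text \<open>Boundedness of an infinite matrix is stated on its finite sections, so that it does not
  presuppose convergence of the row series.\<close>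

definition bounded_matrix :: "(nat \<Rightarrow> nat \<Rightarrow> complex) \<Rightarrow> real \<Rightarrow> bool" where
  "bounded_matrix M K \<longleftrightarrow> 0 \<le> K \<and>
     (\<forall>N L a b. cmod (\<Sum>n<N. \<Sum>m<L. M n m * a m * cnj (b n))
        \<le> K * sqrt (\<Sum>m<L. (cmod (a m))\<^sup>2) * sqrt (\<Sum>n<N. (cmod (b n))\<^sup>2))"

lemma bounded_matrix_nonneg: "bounded_matrix M K \<Longrightarrow> 0 \<le> K"
  unfolding bounded_matrix_def by blast

lemma bounded_matrixD:
  "bounded_matrix M K \<Longrightarrow> cmod (\<Sum>n<N. \<Sum>m<L. M n m * a m * cnj (b n))
     \<le> K * sqrt (\<Sum>m<L. (cmod (a m))\<^sup>2) * sqrt (\<Sum>n<N. (cmod (b n))\<^sup>2)"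
  unfolding bounded_matrix_def by blast

lemma bounded_matrix_conj_transpose:
  assumes "bounded_matrix M K"
  shows "bounded_matrix (conj_transpose M) K"
  unfolding bounded_matrix_def
proof (intro conjI allI)
  show "0 \<le> K" by (rule bounded_matrix_nonneg[OF assms])
  fix N L a b
  have "(\<Sum>n<N. \<Sum>m<L. conj_transpose M n m * a m * cnj (b n)) = cnj (\<Sum>n<N. \<Sum>m<L. M m n * b n * cnj (a m))"
    by (simp add: conj_transpose_def mult_ac)
  also have "\<dots> = cnj (\<Sum>m<L. \<Sum>n<N. M m n * b n * cnj (a m))"
    by (subst sum.swap) (rule refl)
  finally have "cmod (\<Sum>n<N. \<Sum>m<L. conj_transpose M n m * a m * cnj (b n))
      = cmod (\<Sum>m<L. \<Sum>n<N. M m n * b n * cnj (a m))"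
    by (simp only: complex_mod_cnj)
  also have "\<dots> \<le> K * sqrt (\<Sum>n<N. (cmod (b n))\<^sup>2) * sqrt (\<Sum>m<L. (cmod (a m))\<^sup>2)"
    by (rule bounded_matrixD[OF assms])
  finally show "cmod (\<Sum>n<N. \<Sum>m<L. conj_transpose M n m * a m * cnj (b n))
      \<le> K * sqrt (\<Sum>m<L. (cmod (a m))\<^sup>2) * sqrt (\<Sum>n<N. (cmod (b n))\<^sup>2)"
    by (simp add: mult_ac)
qed

lemma le_square_if_le_mult_sqrt:
  fixes S c :: real
  assumes "S \<le> c * sqrt S"
  shows "S \<le> c\<^sup>2"
proof (cases "S \<le> 0")
  case False
  with assms have "sqrt S * sqrt S \<le> c * sqrt S" "0 < sqrt S" by simp_all
  then have "sqrt S \<le> c" by (simp only: mult_le_cancel_right_pos)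
  then have "(sqrt S)\<^sup>2 \<le> c\<^sup>2" by (rule power_mono) (use False in simp)
  with False show ?thesis by simp
qed (simp add: order_trans[OF _ zero_le_power2])

lemma bounded_matrix_row_H2:
  assumes "bounded_matrix M K"
  shows "(\<lambda>m. M n m) \<in> H2"
proof (rule H2_if_partial_sums_bounded(1))
  fix L
  define S where "S = (\<Sum>m<L. (cmod (M n m))\<^sup>2)"
  have S0: "0 \<le> S" unfolding S_def by (simp add: sum_nonneg)
  have "(\<Sum>i<Suc n. \<Sum>m<L. M i m * cnj (M n m) * cnj (zpow n i)) = (\<Sum>m<L. M n m * cnj (M n m))"
    by (simp add: zpow_def)
  also have "\<dots> = complex_of_real S" by (simp only: S_def of_real_sum complex_norm_square)
  finally have "cmod (complex_of_real S)
      \<le> K * sqrt (\<Sum>m<L. (cmod (cnj (M n m)))\<^sup>2) * sqrt (\<Sum>i<Suc n. (cmod (zpow n i))\<^sup>2)"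
    using bounded_matrixD[OF assms, where N="Suc n" and L=L and a="\<lambda>m. cnj (M n m)" and b="zpow n"]
    by (simp only:)
  also have "\<dots> = K * sqrt S"
    by (simp add: S_def zpow_def)
  finally have "S \<le> K * sqrt S" using S0 by simp
  then show "S \<le> K\<^sup>2"
    by (rule le_square_if_le_mult_sqrt)
qed

lemma summable_matrix_row: "bounded_matrix M K \<Longrightarrow> a \<in> H2 \<Longrightarrow> summable (\<lambda>m. M n m * a m)"
  using bounded_matrix_row_H2 by (intro summable_mult_if_square_summable) (auto simp: mem_H2_iff)

lemma bounded_matrix_col_H2: "bounded_matrix M K \<Longrightarrow> (\<lambda>n. M n m) \<in> H2"
  using bounded_matrix_row_H2[OF bounded_matrix_conj_transpose, of M K m]
  by (simp add: conj_transpose_def mem_H2_iff)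

lemma
  assumes M: "bounded_matrix M K" and a: "a \<in> H2"
  shows matrix_op_H2: "matrix_op M a \<in> H2"
    and hsqnorm_matrix_op_le: "hsqnorm (matrix_op M a) \<le> K\<^sup>2 * hsqnorm a"
proof -
  define c where "c = matrix_op M a"
  have "(\<Sum>n<N. (cmod (c n))\<^sup>2) \<le> K\<^sup>2 * hsqnorm a" for N
  proof -
    define S where "S = (\<Sum>n<N. (cmod (c n))\<^sup>2)"
    have S0: "0 \<le> S" unfolding S_def by (simp add: sum_nonneg)
    have "(\<lambda>L. \<Sum>m<L. M n m * a m) \<longlonglongrightarrow> c n" for n
      unfolding c_def matrix_op_def by (rule summable_LIMSEQ[OF summable_matrix_row[OF M a]])
    then have "(\<lambda>L. \<Sum>n<N. (\<Sum>m<L. M n m * a m) * cnj (c n)) \<longlonglongrightarrow> (\<Sum>n<N. c n * cnj (c n))"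
      by (intro tendsto_sum tendsto_mult_right)
    moreover have "(\<Sum>n<N. c n * cnj (c n)) = complex_of_real S"
      by (simp only: S_def of_real_sum complex_norm_square)
    ultimately have lim: "(\<lambda>L. \<Sum>n<N. \<Sum>m<L. M n m * a m * cnj (c n)) \<longlonglongrightarrow> complex_of_real S"
      by (simp add: sum_distrib_right)
    have "cmod (\<Sum>n<N. \<Sum>m<L. M n m * a m * cnj (c n)) \<le> K * sqrt (hsqnorm a) * sqrt S" for L
    proof -
      have "cmod (\<Sum>n<N. \<Sum>m<L. M n m * a m * cnj (c n)) \<le> K * sqrt (\<Sum>m<L. (cmod (a m))\<^sup>2) * sqrt S"
        unfolding S_def by (rule bounded_matrixD[OF M])
      also have "\<dots> \<le> K * sqrt (hsqnorm a) * sqrt S"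
        using bounded_matrix_nonneg[OF M] partial_sum_le_hsqnorm[OF a] S0
        by (intro mult_right_mono mult_left_mono) auto
      finally show ?thesis .
    qed
    then have "cmod (complex_of_real S) \<le> K * sqrt (hsqnorm a) * sqrt S"
      by (intro LIMSEQ_le_const2[OF tendsto_norm[OF lim]]) auto
    then have "S \<le> (K * sqrt (hsqnorm a)) * sqrt S"
      using S0 by simp
    then have "S \<le> (K * sqrt (hsqnorm a))\<^sup>2"
      by (rule le_square_if_le_mult_sqrt)
    then show ?thesis
      using hsqnorm_nonneg[OF a] by (simp add: S_def power_mult_distrib)
  qed
  then show "matrix_op M a \<in> H2" and "hsqnorm (matrix_op M a) \<le> K\<^sup>2 * hsqnorm a"
    unfolding c_def by (fact H2_if_partial_sums_bounded)+
qed

lemma hnorm_matrix_op_le: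
  assumes M: "bounded_matrix M K" and a: "a \<in> H2"
  shows "hnorm (matrix_op M a) \<le> K * hnorm a"
proof -
  have "hnorm (matrix_op M a) \<le> sqrt (K\<^sup>2 * hsqnorm a)"
    unfolding hnorm_eq_sqrt_hsqnorm by (rule real_sqrt_le_mono[OF hsqnorm_matrix_op_le[OF M a]])
  also have "\<dots> = K * hnorm a"
    using bounded_matrix_nonneg[OF M] by (simp add: real_sqrt_mult hnorm_eq_sqrt_hsqnorm)
  finally show ?thesis .
qed

lemma matrix_op_diff:
  assumes M: "bounded_matrix M K" and a: "a \<in> H2" and b: "b \<in> H2"
  shows "matrix_op M (\<lambda>n. a n - b n) = (\<lambda>n. matrix_op M a n - matrix_op M b n)"
  unfolding matrix_op_def
  by (simp add: right_diff_distrib suminf_diff[OF summable_matrix_row[OF M a] summable_matrix_row[OF M b]])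

lemma hinner_matrix_op_truncation:
  assumes M: "bounded_matrix M K" and b: "b \<in> H2"
  shows "hinner (matrix_op M (\<lambda>m. if m < L then a m else 0)) b
    = (\<Sum>m<L. a m * cnj (matrix_op (conj_transpose M) b m))"
proof -
  have col: "summable (\<lambda>n. M n m * cnj (b n))" for m
    using bounded_matrix_col_H2[OF M] b by (intro summable_mult_if_square_summable) (auto simp: mem_H2_iff)
  have "matrix_op M (\<lambda>m. if m < L then a m else 0) n = (\<Sum>m<L. M n m * a m)" for n
    unfolding matrix_op_def by (subst suminf_finite[of "{..<L}"]) auto
  then have "hinner (matrix_op M (\<lambda>m. if m < L then a m else 0)) b = (\<Sum>n. \<Sum>m<L. a m * (M n m * cnj (b n)))"
    unfolding hinner_def by (simp add: sum_distrib_left mult_ac)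
  also have "\<dots> = (\<Sum>m<L. \<Sum>n. a m * (M n m * cnj (b n)))"
    by (intro suminf_sum summable_mult col)
  also have "\<dots> = (\<Sum>m<L. a m * cnj (\<Sum>n. cnj (M n m) * b n))"
    using suminf_cnj[OF col] by (simp add: suminf_mult[OF col])
  finally show ?thesis by (simp add: matrix_op_def conj_transpose_def)
qed

lemma hsqnorm_tail_tendsto_zero:
  assumes "a \<in> H2"
  shows "(\<lambda>L. hsqnorm (\<lambda>n. if n < L then 0 else a n)) \<longlonglongrightarrow> 0"
proof -
  have s: "summable (\<lambda>n. (cmod (a n))\<^sup>2)" using assms by (simp add: mem_H2_iff)
  have "hsqnorm (\<lambda>n. if n < L then 0 else a n) = (\<Sum>n. (cmod (a (n + L)))\<^sup>2)" for L
  proof -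
    have "summable (\<lambda>n. (cmod (if n < L then 0 else a n))\<^sup>2)"
      using s by (rule summable_comparison_test[rotated]) auto
    from suminf_split_initial_segment[OF this, of L] show ?thesis
      by (simp add: hsqnorm_def)
  qed
  then show ?thesis using suminf_exist_split2[OF s] by simp
qed

lemma matrix_op_adjoint:
  assumes M: "bounded_matrix M K" and a: "a \<in> H2" and b: "b \<in> H2"
  shows "hinner (matrix_op M a) b = hinner a (matrix_op (conj_transpose M) b)"
proof -
  define trunc where "trunc L = (\<lambda>m. if m < L then a m else 0)" for L
  define tail where "tail L = (\<lambda>m. if m < L then 0 else a m)" for L
  have truncH: "trunc L \<in> H2" for L
    unfolding trunc_def by (rule H2_finite_support[of "{..<L}"]) auto
  have tail_eq: "tail L = (\<lambda>m. a m - trunc L m)" for L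
    unfolding tail_def trunc_def by auto
  have tailH: "tail L \<in> H2" for L
    unfolding tail_eq by (rule H2_diff[OF a truncH])
  have "(\<lambda>L. hinner (matrix_op M (trunc L)) b) \<longlonglongrightarrow> hinner a (matrix_op (conj_transpose M) b)"
    unfolding trunc_def hinner_matrix_op_truncation[OF M b]
    using summable_LIMSEQ[OF summable_hinner[OF a matrix_op_H2[OF bounded_matrix_conj_transpose[OF M] b]]]
    unfolding hinner_def .
  moreover have "(\<lambda>L. hinner (matrix_op M (trunc L)) b) \<longlonglongrightarrow> hinner (matrix_op M a) b"
  proof -
    have bound: "cmod (hinner (matrix_op M a) b - hinner (matrix_op M (trunc L)) b) \<le> K * hnorm (tail L) * hnorm b" for L
    proof -
      have "hinner (matrix_op M a) b - hinner (matrix_op M (trunc L)) b = hinner (matrix_op M (tail L)) b"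
        unfolding tail_eq matrix_op_diff[OF M a truncH]
        using hinner_diff_left[OF matrix_op_H2[OF M a] matrix_op_H2[OF M truncH] b] by simp
      also have "cmod \<dots> \<le> hnorm (matrix_op M (tail L)) * hnorm b"
        by (rule hinner_Cauchy_Schwarz[OF matrix_op_H2[OF M tailH] b])
      also have "\<dots> \<le> K * hnorm (tail L) * hnorm b"
        using hsqnorm_nonneg[OF b]
        by (intro mult_right_mono hnorm_matrix_op_le[OF M tailH]) (simp add: hnorm_eq_sqrt_hsqnorm)
      finally show ?thesis .
    qed
    have "(\<lambda>L. hnorm (tail L)) \<longlonglongrightarrow> 0"
      using tendsto_real_sqrt[OF hsqnorm_tail_tendsto_zero[OF a]]
      unfolding tail_def hnorm_eq_sqrt_hsqnorm by simp
    from tendsto_mult_left_zero[OF tendsto_mult_right_zero[OF this]]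
    have "(\<lambda>L. hinner (matrix_op M a) b - hinner (matrix_op M (trunc L)) b) \<longlonglongrightarrow> 0"
      by (rule Lim_null_comparison[OF always_eventually[OF allI[OF bound]]])
    from tendsto_diff[OF tendsto_const[of "hinner (matrix_op M a) b"] this] show ?thesis by simp
  qed
  ultimately show ?thesis by (rule LIMSEQ_unique[rotated])
qed

section \<open>Adjoint pairs and \<open>C\<close>-symmetry\<close>

definition adjoint_pair ::
  "((nat \<Rightarrow> complex) \<Rightarrow> (nat \<Rightarrow> complex)) \<Rightarrow> ((nat \<Rightarrow> complex) \<Rightarrow> (nat \<Rightarrow> complex)) \<Rightarrow> bool" where
  "adjoint_pair T T' \<longleftrightarrow> (\<forall>a\<in>H2. T a \<in> H2) \<and> (\<forall>a\<in>H2. T' a \<in> H2) \<and>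
     (\<forall>a\<in>H2. \<forall>b\<in>H2. hinner (T a) b = hinner a (T' b))"

lemma adjoint_pair_matrix_op:
  assumes "bounded_matrix M K"
  shows "adjoint_pair (matrix_op M) (matrix_op (conj_transpose M))"
  unfolding adjoint_pair_def
  using matrix_op_H2[OF assms] matrix_op_H2[OF bounded_matrix_conj_transpose[OF assms]]
    matrix_op_adjoint[OF assms]
  by blast

lemma
  assumes "adjoint_pair T T'" and "a \<in> H2"
  shows adjoint_pair_H2: "T a \<in> H2"
    and adjoint_pair_H2': "T' a \<in> H2"
    and adjoint_pair_hinner: "b \<in> H2 \<Longrightarrow> hinner (T a) b = hinner a (T' b)"
  using assms unfolding adjoint_pair_def by blast+

lemma hadjoint_eq:
  assumes TT': "adjoint_pair T T'" and b: "b \<in> H2"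
  shows "hadjoint T b = T' b"
proof -
  have "(THE c. c \<in> H2 \<and> (\<forall>a\<in>H2. hinner (T a) b = hinner a c)) = T' b"
  proof (rule the_equality)
    show "T' b \<in> H2 \<and> (\<forall>a\<in>H2. hinner (T a) b = hinner a (T' b))"
      using adjoint_pair_H2'[OF TT' b] adjoint_pair_hinner[OF TT' _ b] by blast
    fix c assume c: "c \<in> H2 \<and> (\<forall>a\<in>H2. hinner (T a) b = hinner a c)"
    show "c = T' b"
    proof
      fix n
      have "hinner (zpow n) c = hinner (T (zpow n)) b"
        using c zpow_H2 by simp
      also have "\<dots> = hinner (zpow n) (T' b)"
        by (rule adjoint_pair_hinner[OF TT' zpow_H2 b])
      finally have "hinner (zpow n) c = hinner (zpow n) (T' b)" .
      then show "c n = T' b n" by (simp add: hinner_zpow_left)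
    qed
  qed
  then show ?thesis using b by (simp add: hadjoint_def)
qed

lemma adjoint_conjugation_coord:
  assumes C: "conjugation C" and TT': "adjoint_pair T T'" and a: "a \<in> H2"
  shows "T' (C a) k = hinner (C (T (zpow k))) a"
proof -
  have Tk: "T (zpow k) \<in> H2" by (rule adjoint_pair_H2[OF TT' zpow_H2])
  have CTk: "C (T (zpow k)) \<in> H2" by (rule conjugation_H2[OF C Tk])
  have "T' (C a) k = cnj (hinner (zpow k) (T' (C a)))" by (simp add: hinner_zpow_left)
  also have "hinner (zpow k) (T' (C a)) = hinner (T (zpow k)) (C a)"
    by (rule adjoint_pair_hinner[OF TT' zpow_H2 conjugation_H2[OF C a], symmetric])
  also have "\<dots> = hinner (C (C (T (zpow k)))) (C a)" by (simp add: conjugation_involutive[OF C Tk])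
  also have "\<dots> = hinner a (C (T (zpow k)))" by (rule conjugation_hinner[OF C CTk a])
  also have "cnj \<dots> = hinner (C (T (zpow k))) a" by (rule hinner_commute[OF a CTk, symmetric])
  finally show ?thesis .
qed

lemma conjugation_op_coord:
  assumes C: "conjugation C" and TT': "adjoint_pair T T'" and a: "a \<in> H2"
  shows "C (T a) k = hinner (T' (C (zpow k))) a"
proof -
  have Ta: "T a \<in> H2" by (rule adjoint_pair_H2[OF TT' a])
  have Ck: "C (zpow k) \<in> H2" by (rule conjugation_H2[OF C zpow_H2])
  have "C (T a) k = hinner (C (T a)) (C (C (zpow k)))"
    by (simp add: hinner_zpow_right conjugation_involutive[OF C zpow_H2])
  also have "\<dots> = hinner (C (zpow k)) (T a)" by (rule conjugation_hinner[OF C Ta Ck])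
  also have "\<dots> = cnj (hinner (T a) (C (zpow k)))" by (rule hinner_commute[OF Ta Ck])
  also have "hinner (T a) (C (zpow k)) = hinner a (T' (C (zpow k)))"
    by (rule adjoint_pair_hinner[OF TT' a Ck])
  also have "cnj \<dots> = hinner (T' (C (zpow k))) a"
    by (rule hinner_commute[OF a adjoint_pair_H2'[OF TT' Ck], symmetric])
  finally show ?thesis .
qed

lemma C_symmetric_iff_symmetric_coords:
  assumes C: "conjugation C" and TT': "adjoint_pair T T'"
  shows "C_symmetric C T \<longleftrightarrow> (\<forall>j k. T' (C (zpow j)) k = T' (C (zpow k)) j)"
proof -
  have "C_symmetric C T \<longleftrightarrow> (\<forall>a\<in>H2. T' (C a) = C (T a))"
    unfolding C_symmetric_def
  proof (intro ball_cong refl)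
    fix a assume a: "a \<in> H2"
    have "T' (C a) \<in> H2" by (rule adjoint_pair_H2'[OF TT' conjugation_H2[OF C a]])
    moreover have "T a \<in> H2" by (rule adjoint_pair_H2[OF TT' a])
    ultimately show "C (hadjoint T (C a)) = T a \<longleftrightarrow> T' (C a) = C (T a)"
      unfolding hadjoint_eq[OF TT' conjugation_H2[OF C a]]
      using conjugation_involutive[OF C] by metis
  qed
  also have "\<dots> \<longleftrightarrow> (\<forall>k. T' (C (zpow k)) = C (T (zpow k)))"
  proof
    assume "\<forall>a\<in>H2. T' (C a) = C (T a)"
    then show "\<forall>k. T' (C (zpow k)) = C (T (zpow k))" using zpow_H2 by blast
  next
    assume basis: "\<forall>k. T' (C (zpow k)) = C (T (zpow k))"
    show "\<forall>a\<in>H2. T' (C a) = C (T a)"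
    proof (intro ballI ext)
      fix a k assume "a \<in> H2"
      then show "T' (C a) k = C (T a) k"
        using basis by (simp add: adjoint_conjugation_coord[OF C TT'] conjugation_op_coord[OF C TT'])
    qed
  qed
  also have "\<dots> \<longleftrightarrow> (\<forall>j k. T' (C (zpow j)) k = T' (C (zpow k)) j)"
  proof -
    have "C (T (zpow k)) j = T' (C (zpow j)) k" for j k
      using conjugation_op_coord[OF C TT' zpow_H2, of k j] by (simp add: hinner_zpow_right)
    then show ?thesis by (auto simp: fun_eq_iff)
  qed
  finally show ?thesis .
qed

section \<open>Toeplitz matrices\<close>

lemma integral_mult_le_sqrt_integral_square:
  fixes f g :: "'a \<Rightarrow> real"
  assumes [measurable]: "f \<in> borel_measurable M" "g \<in> borel_measurable M"
    and f0: "\<And>x. 0 \<le> f x" and g0: "\<And>x. 0 \<le> g x"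
    and f2: "integrable M (\<lambda>x. (f x)\<^sup>2)" and g2: "integrable M (\<lambda>x. (g x)\<^sup>2)"
  shows "(\<integral>x. f x * g x \<partial>M) \<le> sqrt (\<integral>x. (f x)\<^sup>2 \<partial>M) * sqrt (\<integral>x. (g x)\<^sup>2 \<partial>M)"
proof -
  have fg: "integrable M (\<lambda>x. f x * g x)"
  proof (rule Bochner_Integration.integrable_bound[OF Bochner_Integration.integrable_add[OF f2 g2]])
    have "f x * g x \<le> (f x)\<^sup>2 + (g x)\<^sup>2" for x
      using sum_squares_bound[of "f x" "g x"] mult_nonneg_nonneg[OF f0 g0, of x x] by linarith
    then show "AE x in M. norm (f x * g x) \<le> norm ((f x)\<^sup>2 + (g x)\<^sup>2)"
      using f0 g0 by (intro AE_I2) (simp add: abs_of_nonneg)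
  qed measurable
  have "ennreal ((\<integral>x. f x * g x \<partial>M)\<^sup>2) = (\<integral>\<^sup>+x. ennreal (f x) * ennreal (g x) \<partial>M)\<^sup>2"
    using nn_integral_eq_integral[OF fg] f0 g0 by (simp add: ennreal_mult ennreal_power)
  also have "\<dots> \<le> (\<integral>\<^sup>+x. ennreal (f x) ^ 2 \<partial>M) * (\<integral>\<^sup>+x. ennreal (g x) ^ 2 \<partial>M)"
    by (rule Cauchy_Schwarz_nn_integral) measurable
  also have "\<dots> = ennreal ((\<integral>x. (f x)\<^sup>2 \<partial>M) * (\<integral>x. (g x)\<^sup>2 \<partial>M))"
    using nn_integral_eq_integral[OF f2] nn_integral_eq_integral[OF g2] f0 g0
    by (simp add: ennreal_mult ennreal_power)
  finally have "(\<integral>x. f x * g x \<partial>M)\<^sup>2 \<le> (\<integral>x. (f x)\<^sup>2 \<partial>M) * (\<integral>x. (g x)\<^sup>2 \<partial>M)"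
    by (simp add: ennreal_le_iff)
  then show ?thesis by (simp add: real_le_rsqrt flip: real_sqrt_mult)
qed

lemma set_integral_cis_int:
  fixes j :: int
  shows "(LINT t:{0..2*pi}|lborel. cis (real_of_int j * t)) = (if j = 0 then complex_of_real (2*pi) else 0)"
proof (cases "j = 0")
  case True
  have "(LBINT t=ereal 0..ereal (2*pi). (1::complex)) = complex_of_real (2*pi) - complex_of_real 0"
    by (rule interval_integral_FTC_finite[where F=complex_of_real]) (auto intro!: derivative_eq_intros continuous_intros)
  then show ?thesis using True by (simp add: interval_integral_Icc)
next
  case False
  have "(LBINT t=ereal 0..ereal (2*pi). cis (real_of_int j * t))
      = cis (real_of_int j * (2*pi)) / (\<i> * of_int j) - cis (real_of_int j * 0) / (\<i> * of_int j)"
  proof (rule interval_integral_FTC_finite[where F="\<lambda>t. cis (real_of_int j * t) / (\<i> * of_int j)"])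
    show "continuous_on {min 0 (2 * pi)..max 0 (2 * pi)} (\<lambda>t. cis (real_of_int j * t))"
      by (intro continuous_intros)
    fix x :: real
    have e: "\<And>t. cis (real_of_int j * t) = (\<lambda>z. exp (\<i> * of_int j * z)) (complex_of_real t)"
      by (simp add: cis_conv_exp mult.assoc)
    have "((\<lambda>z. exp (\<i> * of_int j * z) / (\<i> * of_int j)) has_field_derivative
           exp (\<i> * of_int j * complex_of_real x)) (at (complex_of_real x))"
      using False by (auto intro!: derivative_eq_intros)
    from has_vector_derivative_real_field[OF this]
    show "((\<lambda>t. cis (real_of_int j * t) / (\<i> * of_int j)) has_vector_derivative cis (real_of_int j * x))
        (at x within {min 0 (2 * pi)..max 0 (2 * pi)})"
      by (simp only: e)
  qed
  moreover have "cis (real_of_int j * (2*pi)) = 1"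
    by (metis cis_multiple_2pi Ints_of_int mult.commute)
  ultimately show ?thesis using False by (simp add: interval_integral_Icc)
qed

lemma integrable_indicator_bounded:
  fixes g :: "real \<Rightarrow> 'a::{banach, second_countable_topology}"
  assumes "g \<in> borel_measurable lborel" "\<And>t. norm (g t) \<le> G"
  shows "integrable lborel (\<lambda>t. indicator {0..2*pi} t *\<^sub>R g t)"
proof (rule Bochner_Integration.integrable_bound)
  show "integrable lborel (\<lambda>t. indicator {0..2*pi} t * G)"
    by (intro integrable_mult_left integrable_real_indicator) auto
  show "(\<lambda>t. indicator {0..2*pi} t *\<^sub>R g t) \<in> borel_measurable lborel"
    using assms(1) by measurable
  show "AE x in lborel. norm (indicator {0..2*pi} x *\<^sub>R g x) \<le> norm (indicator {0..2*pi} x * G)"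
    using assms(2) by (auto simp: indicator_def intro!: AE_I2 order_trans[OF _ abs_ge_self])
qed

lemma integrable_Linf_circle_mult:
  fixes g :: "real \<Rightarrow> complex"
  assumes "Linf_circle \<phi>" "g \<in> borel_measurable lborel" "\<And>t. norm (g t) \<le> G"
  shows "integrable lborel (\<lambda>t. indicator {0..2*pi} t *\<^sub>R (\<phi> t * g t))"
proof -
  obtain B where mb: "(\<lambda>x. indicator {0..2*pi} x *\<^sub>R \<phi> x) \<in> borel_measurable lborel"
    and B: "AE t in lborel. t \<in> {0..2*pi} \<longrightarrow> cmod (\<phi> t) \<le> B"
    using assms(1) unfolding Linf_circle_def set_borel_measurable_def by blast
  show ?thesis
  proof (rule Bochner_Integration.integrable_bound)
    show "integrable lborel (\<lambda>t. indicator {0..2*pi} t * (B * G))"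
      by (intro integrable_mult_left integrable_real_indicator) auto
    have "(\<lambda>t. (indicator {0..2*pi} t *\<^sub>R \<phi> t) * g t) \<in> borel_measurable lborel"
      using mb assms(2) by measurable
    then show "(\<lambda>t. indicator {0..2*pi} t *\<^sub>R (\<phi> t * g t)) \<in> borel_measurable lborel"
      by (simp add: scaleR_conv_of_real mult.assoc)
    show "AE x in lborel. norm (indicator {0..2*pi} x *\<^sub>R (\<phi> x * g x)) \<le> norm (indicator {0..2*pi} x * (B * G))"
      using B
    proof (rule eventually_mono)
      fix x assume "x \<in> {0..2*pi} \<longrightarrow> cmod (\<phi> x) \<le> B"
      then have "x \<in> {0..2*pi} \<Longrightarrow> cmod (\<phi> x * g x) \<le> B * G"
        using assms(3)[of x] by (simp add: norm_mult mult_mono')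
      then show "norm (indicator {0..2*pi} x *\<^sub>R (\<phi> x * g x)) \<le> norm (indicator {0..2*pi} x * (B * G))"
        by (cases "x \<in> {0..2*pi}") simp_all
    qed
  qed
qed

definition trigpoly :: "(nat \<Rightarrow> complex) \<Rightarrow> nat \<Rightarrow> real \<Rightarrow> complex" where
  "trigpoly a L t = (\<Sum>m<L. a m * cis (real m * t))"

lemma borel_measurable_trigpoly [measurable]: "trigpoly a L \<in> borel_measurable borel"
  unfolding trigpoly_def by (intro borel_measurable_continuous_onI continuous_intros)

lemma cmod_trigpoly_le: "cmod (trigpoly a L t) \<le> (\<Sum>m<L. cmod (a m))"
  unfolding trigpoly_def by (rule order_trans[OF norm_sum]) (simp add: norm_mult)

lemma trigpoly_mult_cnj:
  "trigpoly a L t * cnj (trigpoly b N t) =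
   (\<Sum>n<N. \<Sum>m<L. cis (- (real_of_int (int n - int m) * t)) * (a m * cnj (b n)))"
proof -
  have "trigpoly a L t * cnj (trigpoly b N t) =
      (\<Sum>n<N. \<Sum>m<L. (cis (real m * t) * cis (- (real n * t))) * (a m * cnj (b n)))"
    unfolding trigpoly_def
    by (simp add: cis_cnj sum_product mult_ac sum.swap[of _ "{..<L}"])
  also have "\<dots> = (\<Sum>n<N. \<Sum>m<L. cis (- (real_of_int (int n - int m) * t)) * (a m * cnj (b n)))"
    by (simp add: cis_mult algebra_simps)
  finally show ?thesis .
qed

lemma integral_trigpoly_mult_cnj:
  fixes \<psi> :: "real \<Rightarrow> complex"
  assumes int: "\<And>k::int. integrable lborel (\<lambda>t. indicator {0..2*pi} t *\<^sub>R (\<psi> t * cis (- (real_of_int k * t))))"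
  shows "(\<integral>t. indicator {0..2*pi} t *\<^sub>R (\<psi> t * (trigpoly a L t * cnj (trigpoly b N t))) \<partial>lborel)
    = (\<Sum>n<N. \<Sum>m<L. (\<integral>t. indicator {0..2*pi} t *\<^sub>R (\<psi> t * cis (- (real_of_int (int n - int m) * t))) \<partial>lborel)
          * (a m * cnj (b n)))"
proof -
  define G where "G n m t = indicator {0..2*pi} t *\<^sub>R (\<psi> t * cis (- (real_of_int (int n - int m) * t)))" for n m t
  have iG: "integrable lborel (\<lambda>t. G n m t * (a m * cnj (b n)))" for n m
    unfolding G_def by (intro integrable_mult_left int)
  have "(\<integral>t. indicator {0..2*pi} t *\<^sub>R (\<psi> t * (trigpoly a L t * cnj (trigpoly b N t))) \<partial>lborel)
      = (\<integral>t. (\<Sum>n<N. \<Sum>m<L. G n m t * (a m * cnj (b n))) \<partial>lborel)"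
    unfolding trigpoly_mult_cnj G_def
    by (simp only: scaleR_sum_right sum_distrib_left mult_scaleR_left mult.assoc)
  also have "\<dots> = (\<Sum>n<N. \<Sum>m<L. (\<integral>t. G n m t \<partial>lborel) * (a m * cnj (b n)))"
    using iG by (simp add: Bochner_Integration.integral_sum Bochner_Integration.integrable_sum)
  finally show ?thesis unfolding G_def .
qed

lemma integrable_trigpoly_square:
  "integrable lborel (\<lambda>t. (indicator {0..2*pi} t * cmod (trigpoly a L t))\<^sup>2)"
proof -
  have "integrable lborel (\<lambda>t. indicator {0..2*pi} t *\<^sub>R (cmod (trigpoly a L t))\<^sup>2)"
    by (rule integrable_indicator_bounded[where G="(\<Sum>m<L. cmod (a m))\<^sup>2"])
      (auto intro: power_mono cmod_trigpoly_le)
  moreover have "(indicator {0..2*pi} t * cmod (trigpoly a L t))\<^sup>2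
      = indicator {0..2*pi} t *\<^sub>R (cmod (trigpoly a L t))\<^sup>2" for t :: real
    by (simp add: power_mult_distrib split: split_indicator)
  ultimately show ?thesis by simp
qed

lemma integral_trigpoly_square:
  "(\<integral>t. (indicator {0..2*pi} t * cmod (trigpoly a L t))\<^sup>2 \<partial>lborel) = 2*pi * (\<Sum>m<L. (cmod (a m))\<^sup>2)"
proof -
  have int_cis: "integrable lborel (\<lambda>t. indicator {0..2*pi} t *\<^sub>R (1 * cis (- (real_of_int k * t))))" for k :: int
    by (rule integrable_indicator_bounded[where G=1]) (auto intro!: borel_measurable_continuous_onI continuous_intros)
  have cis_integral: "(\<integral>t. indicator {0..2*pi} t *\<^sub>R (1 * cis (- (real_of_int k * t))) \<partial>lborel)
      = (if k = 0 then complex_of_real (2*pi) else 0)" for k :: int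
    using set_integral_cis_int[of "- k"] by (simp add: set_lebesgue_integral_def)
  have "complex_of_real (\<integral>t. (indicator {0..2*pi} t * cmod (trigpoly a L t))\<^sup>2 \<partial>lborel)
      = (\<integral>t. complex_of_real ((indicator {0..2*pi} t * cmod (trigpoly a L t))\<^sup>2) \<partial>lborel)"
    by (rule integral_complex_of_real[symmetric])
  also have "\<dots> = (\<integral>t. indicator {0..2*pi} t *\<^sub>R (1 * (trigpoly a L t * cnj (trigpoly a L t))) \<partial>lborel)"
    by (rule Bochner_Integration.integral_cong[OF refl])
      (simp add: power_mult_distrib complex_norm_square del: of_real_power split: split_indicator)
  also have "\<dots> = (\<Sum>n<L. \<Sum>m<L. (if int n - int m = 0 then complex_of_real (2*pi) else 0) * (a m * cnj (a n)))"
    by (simp only: integral_trigpoly_mult_cnj[OF int_cis] cis_integral)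
  also have "\<dots> = (\<Sum>n<L. \<Sum>m<L. if m = n then complex_of_real (2*pi) * (a m * cnj (a n)) else 0)"
    by (intro sum.cong refl) auto
  also have "\<dots> = (\<Sum>n<L. complex_of_real (2*pi) * (a n * cnj (a n)))"
    by simp
  also have "\<dots> = complex_of_real (2*pi * (\<Sum>m<L. (cmod (a m))\<^sup>2))"
    by (simp add: sum_distrib_left complex_norm_square del: of_real_power)
  finally show ?thesis by (simp only: of_real_eq_iff)
qed

lemma toeplitz_form_eq_integral:
  assumes "Linf_circle \<phi>"
  shows "(\<Sum>n<N. \<Sum>m<L. fourier_coeff \<phi> (int n - int m) * a m * cnj (b n))
    = (\<integral>t. indicator {0..2*pi} t *\<^sub>R (\<phi> t * (trigpoly a L t * cnj (trigpoly b N t))) \<partial>lborel) / (2*pi)"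
proof -
  have int: "integrable lborel (\<lambda>t. indicator {0..2*pi} t *\<^sub>R (\<phi> t * cis (- (real_of_int k * t))))" for k :: int
    by (rule integrable_Linf_circle_mult[OF assms, where G=1])
      (auto intro!: borel_measurable_continuous_onI continuous_intros)
  have "fourier_coeff \<phi> k = (\<integral>t. indicator {0..2*pi} t *\<^sub>R (\<phi> t * cis (- (real_of_int k * t))) \<partial>lborel) / (2*pi)" for k
    unfolding fourier_coeff_def set_lebesgue_integral_def by simp
  then show ?thesis
    by (simp add: integral_trigpoly_mult_cnj[OF int] sum_divide_distrib mult.assoc)
qed

lemma norm_integral_trigpoly_form_le:
  fixes \<psi> :: "real \<Rightarrow> complex"
  assumes \<psi>: "AE t in lborel. t \<in> {0..2*pi} \<longrightarrow> cmod (\<psi> t) \<le> K" and K: "0 \<le> K"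
  shows "cmod (\<integral>t. indicator {0..2*pi} t *\<^sub>R (\<psi> t * (trigpoly a L t * cnj (trigpoly b N t))) \<partial>lborel)
    \<le> 2*pi * (K * sqrt (\<Sum>m<L. (cmod (a m))\<^sup>2) * sqrt (\<Sum>n<N. (cmod (b n))\<^sup>2))"
proof -
  define f where "f t = indicator {0..2*pi} t * cmod (trigpoly a L t)" for t
  define g where "g t = indicator {0..2*pi} t * cmod (trigpoly b N t)" for t
  have fg: "integrable lborel (\<lambda>t. f t * g t)"
  proof -
    have "integrable lborel (\<lambda>t. indicator {0..2*pi} t *\<^sub>R (cmod (trigpoly a L t) * cmod (trigpoly b N t)))"
      by (rule integrable_indicator_bounded[where G="(\<Sum>m<L. cmod (a m)) * (\<Sum>n<N. cmod (b n))"])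
        (auto intro!: mult_mono cmod_trigpoly_le sum_nonneg)
    moreover have "f t * g t = indicator {0..2*pi} t *\<^sub>R (cmod (trigpoly a L t) * cmod (trigpoly b N t))" for t
      by (simp add: f_def g_def split: split_indicator)
    ultimately show ?thesis by simp
  qed
  have "cmod (\<integral>t. indicator {0..2*pi} t *\<^sub>R (\<psi> t * (trigpoly a L t * cnj (trigpoly b N t))) \<partial>lborel)
      \<le> (\<integral>t. norm (indicator {0..2*pi} t *\<^sub>R (\<psi> t * (trigpoly a L t * cnj (trigpoly b N t)))) \<partial>lborel)"
    by (rule integral_norm_bound)
  also have "\<dots> \<le> (\<integral>t. K * (f t * g t) \<partial>lborel)"
  proof (rule integral_mono_AE')
    show "integrable lborel (\<lambda>t. K * (f t * g t))" using fg by simp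
    show "AE t in lborel. norm (indicator {0..2*pi} t *\<^sub>R (\<psi> t * (trigpoly a L t * cnj (trigpoly b N t))))
        \<le> K * (f t * g t)"
      using \<psi>
    proof (rule eventually_mono)
      fix t assume "t \<in> {0..2*pi} \<longrightarrow> cmod (\<psi> t) \<le> K"
      then show "norm (indicator {0..2*pi} t *\<^sub>R (\<psi> t * (trigpoly a L t * cnj (trigpoly b N t))))
          \<le> K * (f t * g t)"
        by (cases "t \<in> {0..2*pi}") (simp_all add: f_def g_def norm_mult mult_right_mono)
    qed
    show "AE t in lborel. 0 \<le> K * (f t * g t)" using K by (simp add: f_def g_def)
  qed
  also have "\<dots> = K * (\<integral>t. f t * g t \<partial>lborel)" by simp
  also have "\<dots> \<le> K * (sqrt (\<integral>t. (f t)\<^sup>2 \<partial>lborel) * sqrt (\<integral>t. (g t)\<^sup>2 \<partial>lborel))"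
    using K by (intro mult_left_mono integral_mult_le_sqrt_integral_square)
      (auto simp: f_def g_def integrable_trigpoly_square)
  also have "\<dots> = K * (sqrt (2*pi) * sqrt (\<Sum>m<L. (cmod (a m))\<^sup>2) * (sqrt (2*pi) * sqrt (\<Sum>n<N. (cmod (b n))\<^sup>2)))"
    by (simp only: f_def g_def integral_trigpoly_square real_sqrt_mult)
  also have "\<dots> = (sqrt (2*pi) * sqrt (2*pi)) * (K * sqrt (\<Sum>m<L. (cmod (a m))\<^sup>2) * sqrt (\<Sum>n<N. (cmod (b n))\<^sup>2))"
    by (simp only: mult_ac)
  finally show ?thesis by simp
qed

lemma bounded_matrix_toeplitz:
  assumes L: "Linf_circle \<phi>"
  obtains K where "bounded_matrix (\<lambda>n m. fourier_coeff \<phi> (int n - int m)) K"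
proof -
  obtain B where "AE t in lborel. t \<in> {0..2*pi} \<longrightarrow> cmod (\<phi> t) \<le> B"
    using L unfolding Linf_circle_def by blast
  then have B: "AE t in lborel. t \<in> {0..2*pi} \<longrightarrow> cmod (\<phi> t) \<le> max B 0"
    by (rule eventually_mono) auto
  have "cmod (\<Sum>n<N. \<Sum>m<L. fourier_coeff \<phi> (int n - int m) * a m * cnj (b n))
      \<le> max B 0 * sqrt (\<Sum>m<L. (cmod (a m))\<^sup>2) * sqrt (\<Sum>n<N. (cmod (b n))\<^sup>2)" for N L a b
  proof -
    have "cmod (\<Sum>n<N. \<Sum>m<L. fourier_coeff \<phi> (int n - int m) * a m * cnj (b n))
        = cmod (\<integral>t. indicator {0..2*pi} t *\<^sub>R (\<phi> t * (trigpoly a L t * cnj (trigpoly b N t))) \<partial>lborel) / (2*pi)"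
      unfolding toeplitz_form_eq_integral[OF L] by (simp add: norm_divide)
    also have "\<dots> \<le> max B 0 * sqrt (\<Sum>m<L. (cmod (a m))\<^sup>2) * sqrt (\<Sum>n<N. (cmod (b n))\<^sup>2)"
      using norm_integral_trigpoly_form_le[OF B, of a L b N] by (simp add: pos_divide_le_eq mult.commute)
    finally show ?thesis .
  qed
  then show ?thesis
    using that[of "max B 0"] unfolding bounded_matrix_def by auto
qed

lemma toeplitz_eq_matrix_op: "toeplitz \<phi> = matrix_op (\<lambda>n m. fourier_coeff \<phi> (int n - int m))"
  unfolding toeplitz_def matrix_op_def ..

lemma cnm_commute: "cnm f n m = cnm f m n"
  unfolding cnm_def by (simp add: mult.commute)

lemma conjugation_zpow_eq_cnm:
  assumes C: "conjugation C" and onb: "orthonormal_basis f" and fixed: "\<And>k. C (f k) = f k"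
  shows "C (zpow m) n = cnm f n m"
proof -
  have "hinner (C (zpow m)) (f k) = f k m" for k
    using conjugation_hinner[OF C zpow_H2 orthonormal_basis_H2[OF onb, of k]] fixed[of k]
    by (simp add: hinner_zpow_right)
  then show ?thesis
    using orthonormal_basis_expansion[OF onb conjugation_H2[OF C zpow_H2[of m]]]
    unfolding cnm_def by (simp add: hinner_zpow_right mult.commute)
qed

lemma suminf_split_diagonal:
  fixes g :: "int \<Rightarrow> complex" and x :: "nat \<Rightarrow> complex"
  assumes "summable (\<lambda>n. g (int n - int j) * x n)"
  shows "(\<Sum>n. g (int n - int j) * x n)
    = (\<Sum>n. g (int (n + 1)) * x (n + 1 + j)) + (\<Sum>l\<le>j. g (- int l) * x (j - l))"
proof -
  have "(\<Sum>l\<le>j. g (- int l) * x (j - l))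
      = (\<Sum>l<Suc j. g (int (Suc j - Suc l) - int j) * x (Suc j - Suc l))"
    unfolding lessThan_Suc_atMost by (intro sum.cong) (auto simp: of_nat_diff)
  also have "\<dots> = (\<Sum>i<Suc j. g (int i - int j) * x i)"
    by (rule sum.nat_diff_reindex)
  finally have "(\<Sum>l\<le>j. g (- int l) * x (j - l)) = (\<Sum>i<Suc j. g (int i - int j) * x i)" .
  moreover have "(\<Sum>n. g (int (n + Suc j) - int j) * x (n + Suc j)) = (\<Sum>n. g (int (n + 1)) * x (n + 1 + j))"
    by (simp add: add.commute add.left_commute)
  ultimately show ?thesis
    using suminf_split_initial_segment[OF assms, of "Suc j"] by simp
qed

theorem theorem6p1:
  fixes \<phi> :: "real \<Rightarrow> complex"
    and C :: "(nat \<Rightarrow> complex) \<Rightarrow> (nat \<Rightarrow> complex)"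
    and f :: "nat \<Rightarrow> (nat \<Rightarrow> complex)"
  assumes "Linf_circle \<phi>"
    and "conjugation C"
    and "orthonormal_basis f"
    and "\<And>n. C (f n) = f n"
  shows "C_symmetric C (toeplitz \<phi>) \<longleftrightarrow>
    (\<forall>j k. (\<Sum>n. cnj (fourier_coeff \<phi> (int n - int k)) * cnm f n j)
         = (\<Sum>n. cnj (fourier_coeff \<phi> (int (n + 1))) * cnm f k (n + 1 + j))
           + (\<Sum>l\<le>j. cnj (fourier_coeff \<phi> (- int l)) * cnm f k (j - l)))"
proof -
  define M where "M = (\<lambda>n m. fourier_coeff \<phi> (int n - int m))"
  obtain K where M: "bounded_matrix M K"
    using bounded_matrix_toeplitz[OF assms(1)] unfolding M_def by blast
  define T' where "T' = matrix_op (conj_transpose M)"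
  have pair: "adjoint_pair (toeplitz \<phi>) T'"
    unfolding toeplitz_eq_matrix_op T'_def M_def[symmetric] by (rule adjoint_pair_matrix_op[OF M])
  have lhs: "T' (C (zpow j)) k = (\<Sum>n. cnj (fourier_coeff \<phi> (int n - int k)) * cnm f n j)" for j k
    unfolding T'_def matrix_op_def conj_transpose_def M_def conjugation_zpow_eq_cnm[OF assms(2-4)] ..
  have rhs: "T' (C (zpow k)) j = (\<Sum>n. cnj (fourier_coeff \<phi> (int (n + 1))) * cnm f k (n + 1 + j))
      + (\<Sum>l\<le>j. cnj (fourier_coeff \<phi> (- int l)) * cnm f k (j - l))" for j k
  proof -
    have "summable (\<lambda>n. conj_transpose M j n * C (zpow k) n)"
      by (rule summable_matrix_row[OF bounded_matrix_conj_transpose[OF M] conjugation_H2[OF assms(2) zpow_H2]])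
    then have "summable (\<lambda>n. cnj (fourier_coeff \<phi> (int n - int j)) * cnm f k n)"
      unfolding conj_transpose_def M_def conjugation_zpow_eq_cnm[OF assms(2-4)] cnm_commute[of f _ k] .
    from suminf_split_diagonal[OF this] show ?thesis
      unfolding lhs cnm_commute[of f _ k] .
  qed
  show ?thesis
    unfolding C_symmetric_iff_symmetric_coords[OF assms(2) pair] by (simp only: lhs[symmetric] rhs[symmetric])
qed

end
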